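(* Let $G$ be a connected graph and let $v\in V(G)$ be a cut-vertex such that either (1) $G-v$ has at least three connected components, or (2) $G-v$ has two connected components $G_1,G_2$ such that, for both $i=1,2$, the induced subgraph $G[V(G_i)\cup\{v\}]$ is not isomorphic to a path. Then $v$ is a void vertex of $G$.
   Context: All graphs are finite and simple. For vertices $u,v$ of a connected graph $G$, $d(u,v)$ is the length of a shortest $u$–$v$ path. A set $R\subseteq V(G)$ is a resolving set if for all distinct $x,y\in V(G)$ there is $r\in R$ with $d(r,x)\neq d(r,y)$. The metric dimension $\dim(G)$ is the minimum cardinality of a resolving set, and a resolving set of cardinality $\dim(G)$ is a metric basis. A vertex is a void vertex if it belongs to no metric basis of $G$. A cut-vertex is a vertex $v$ such that $G-v$ is disconnected; $G[S]$ denotes the subgraph induced by $S$. *)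

theory Defs
  imports Main
begin

definition simple_graph :: "'a set \<Rightarrow> ('a \<Rightarrow> 'a \<Rightarrow> bool) \<Rightarrow> bool" where
  "simple_graph V E \<longleftrightarrow> finite V \<and> V \<noteq> {} \<and>
     (\<forall>x y. E x y \<longrightarrow> x \<in> V \<and> y \<in> V) \<and>
     (\<forall>x y. E x y \<longrightarrow> E y x) \<and> (\<forall>x. \<not> E x x)"

definition walk_in :: "'a set \<Rightarrow> ('a \<Rightarrow> 'a \<Rightarrow> bool) \<Rightarrow> 'a \<Rightarrow> 'a \<Rightarrow> nat \<Rightarrow> bool" where
  "walk_in S E x y n \<longleftrightarrow> (\<exists>p :: nat \<Rightarrow> 'a. p 0 = x \<and> p n = y \<and>
      (\<forall>i\<le>n. p i \<in> S) \<and> (\<forall>i<n. E (p i) (p (Suc i))))"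

definition reachable_in :: "'a set \<Rightarrow> ('a \<Rightarrow> 'a \<Rightarrow> bool) \<Rightarrow> 'a \<Rightarrow> 'a \<Rightarrow> bool" where
  "reachable_in S E x y \<longleftrightarrow> (\<exists>n. walk_in S E x y n)"

definition connected_graph :: "'a set \<Rightarrow> ('a \<Rightarrow> 'a \<Rightarrow> bool) \<Rightarrow> bool" where
  "connected_graph V E \<longleftrightarrow> simple_graph V E \<and> (\<forall>x\<in>V. \<forall>y\<in>V. reachable_in V E x y)"

definition dist :: "'a set \<Rightarrow> ('a \<Rightarrow> 'a \<Rightarrow> bool) \<Rightarrow> 'a \<Rightarrow> 'a \<Rightarrow> nat" where
  "dist V E x y = (LEAST n. walk_in V E x y n)"

definition resolving_set :: "'a set \<Rightarrow> ('a \<Rightarrow> 'a \<Rightarrow> bool) \<Rightarrow> 'a set \<Rightarrow> bool" where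
  "resolving_set V E R \<longleftrightarrow> R \<subseteq> V \<and>
     (\<forall>x\<in>V. \<forall>y\<in>V. x \<noteq> y \<longrightarrow> (\<exists>r\<in>R. dist V E r x \<noteq> dist V E r y))"

definition metric_dim :: "'a set \<Rightarrow> ('a \<Rightarrow> 'a \<Rightarrow> bool) \<Rightarrow> nat" where
  "metric_dim V E = (LEAST k. \<exists>R. resolving_set V E R \<and> card R = k)"

definition metric_basis :: "'a set \<Rightarrow> ('a \<Rightarrow> 'a \<Rightarrow> bool) \<Rightarrow> 'a set \<Rightarrow> bool" where
  "metric_basis V E R \<longleftrightarrow> resolving_set V E R \<and> card R = metric_dim V E"

definition void_vertex :: "'a set \<Rightarrow> ('a \<Rightarrow> 'a \<Rightarrow> bool) \<Rightarrow> 'a \<Rightarrow> bool" where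
  "void_vertex V E v \<longleftrightarrow> v \<in> V \<and> (\<forall>R. metric_basis V E R \<longrightarrow> v \<notin> R)"

definition components_minus :: "'a set \<Rightarrow> ('a \<Rightarrow> 'a \<Rightarrow> bool) \<Rightarrow> 'a \<Rightarrow> 'a set set" where
  "components_minus V E v =
     {C. \<exists>x \<in> V - {v}. C = {y. reachable_in (V - {v}) E x y}}"

definition cut_vertex :: "'a set \<Rightarrow> ('a \<Rightarrow> 'a \<Rightarrow> bool) \<Rightarrow> 'a \<Rightarrow> bool" where
  "cut_vertex V E v \<longleftrightarrow> v \<in> V \<and> card (components_minus V E v) \<ge> 2"

definition induced_is_path :: "('a \<Rightarrow> 'a \<Rightarrow> bool) \<Rightarrow> 'a set \<Rightarrow> bool" where
  "induced_is_path E S \<longleftrightarrow> (\<exists>n f. n \<ge> 1 \<and> bij_betw f {0..<n} S \<and>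
      (\<forall>i<n. \<forall>j<n. E (f i) (f j) \<longleftrightarrow> (i = Suc j \<or> j = Suc i)))"

end

theory Submission
  imports Defs
begin

(* Let v lie in a metric basis R. If all of R - {v} lay in one component C of G - v, every
   landmark would see each vertex z outside C through v, as d(r,v) + d(v,z). With three
   components, two neighbours of v in two other components would then be unresolved; with two,
   d(v,-) would be injective on C' + v for the other component C', and a vertex set on which
   d(v,-) is injective and which contains a geodesic to v from each of its vertices induces a
   path. So every component misses some landmark of R - {v}, and then R - {v} still resolves G:
   if d(v,x) < d(v,y), a landmark r outside the component of y has
   d(r,y) = d(r,v) + d(v,y) > d(r,x). This contradicts the minimality of R. *)

lemma exists_exit_step:
  assumes "P (p 0)" "\<not> P (p n)"
  shows "\<exists>i<n. P (p i) \<and> \<not> P (p (Suc i))"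
  using assms(2) by (induction n) (use assms(1) less_Suc_eq in blast)+

lemma pred_closed_nat_set_eq_lessThan:
  fixes D :: "nat set"
  assumes "finite D" and pred: "\<And>m. Suc m \<in> D \<Longrightarrow> m \<in> D"
  shows "D = {..<card D}"
proof -
  have down: "k \<in> D" if "m \<in> D" "k \<le> m" for m k
    using that by (induction m) (auto simp: le_Suc_eq pred)
  have "D \<subseteq> {..<card D}"
  proof
    fix m assume "m \<in> D"
    then have "{..m} \<subseteq> D" using down by blast
    then have "card {..m} \<le> card D" using assms(1) by (rule card_mono[rotated])
    then show "m \<in> {..<card D}" by simp
  qed
  then show ?thesis using card_subset_eq by (metis card_lessThan finite_lessThan)
qed

subsection \<open>Walks\<close>

lemma walk_in_refl: "x \<in> S \<Longrightarrow> walk_in S E x x 0"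
  unfolding walk_in_def by (rule exI[of _ "\<lambda>_. x"]) auto

lemma walk_in_edge: "E x y \<Longrightarrow> x \<in> S \<Longrightarrow> y \<in> S \<Longrightarrow> walk_in S E x y 1"
  unfolding walk_in_def by (rule exI[of _ "\<lambda>i. if i = 0 then x else y"]) auto

lemma walk_in_endpoints: "walk_in S E x y n \<Longrightarrow> x \<in> S \<and> y \<in> S"
  unfolding walk_in_def by force

lemma walk_in_segment:
  assumes "\<forall>i\<le>n. p i \<in> S" "\<forall>i<n. E (p i) (p (Suc i))" "a \<le> b" "b \<le> n"
  shows "walk_in S E (p a) (p b) (b - a)"
  unfolding walk_in_def by (rule exI[of _ "\<lambda>k. p (a + k)"]) (use assms in auto)

lemma walk_in_append:
  assumes "walk_in S E x y m" "walk_in S E y z n"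
  shows "walk_in S E x z (m + n)"
proof -
  obtain p where p: "p 0 = x" "p m = y" "\<forall>i\<le>m. p i \<in> S" "\<forall>i<m. E (p i) (p (Suc i))"
    using assms(1) unfolding walk_in_def by blast
  obtain q where q: "q 0 = y" "q n = z" "\<forall>i\<le>n. q i \<in> S" "\<forall>i<n. E (q i) (q (Suc i))"
    using assms(2) unfolding walk_in_def by blast
  show ?thesis unfolding walk_in_def
  proof (rule exI[of _ "\<lambda>i. if i \<le> m then p i else q (i - m)"], intro conjI allI impI)
    fix i assume "i < m + n"
    show "E (if i \<le> m then p i else q (i - m)) (if Suc i \<le> m then p (Suc i) else q (Suc i - m))"
    proof (cases "i < m")
      case True then show ?thesis using p by auto
    next
      case False
      then have "i - m < n" "Suc i - m = Suc (i - m)" using \<open>i < m + n\<close> by auto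
      then show ?thesis using q p False by (cases "i = m") auto
    qed
  qed (use p q in auto)
qed

lemma walk_in_reverse:
  assumes "\<forall>a b. E a b \<longrightarrow> E b a" "walk_in S E x y n"
  shows "walk_in S E y x n"
proof -
  obtain p where p: "p 0 = x" "p n = y" "\<forall>i\<le>n. p i \<in> S" "\<forall>i<n. E (p i) (p (Suc i))"
    using assms(2) unfolding walk_in_def by blast
  show ?thesis unfolding walk_in_def
  proof (rule exI[of _ "\<lambda>i. p (n - i)"], intro conjI allI impI)
    fix i assume "i < n"
    then have "E (p (n - Suc i)) (p (Suc (n - Suc i)))" and "Suc (n - Suc i) = n - i"
      using p by auto
    then show "E (p (n - i)) (p (n - Suc i))" using assms(1) by metis
  qed (use p in auto)
qed

lemma reachable_in_sym:
  "\<forall>a b. E a b \<longrightarrow> E b a \<Longrightarrow> reachable_in S E x y \<Longrightarrow> reachable_in S E y x"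
  unfolding reachable_in_def by (meson walk_in_reverse)

lemma reachable_in_trans:
  "reachable_in S E x y \<Longrightarrow> reachable_in S E y z \<Longrightarrow> reachable_in S E x z"
  unfolding reachable_in_def by (meson walk_in_append)

subsection \<open>Distances in a connected graph\<close>

locale conn_graph =
  fixes V :: "'a set" and E :: "'a \<Rightarrow> 'a \<Rightarrow> bool"
  assumes connected: "connected_graph V E"
begin

lemma finite_V: "finite V"
  and sym_E: "\<forall>a b. E a b \<longrightarrow> E b a"
  and irrefl_E: "\<not> E x x"
  and E_in_V: "E x y \<Longrightarrow> x \<in> V \<and> y \<in> V"
  and reachable: "x \<in> V \<Longrightarrow> y \<in> V \<Longrightarrow> reachable_in V E x y"
  using connected unfolding connected_graph_def simple_graph_def by auto

lemma dist_le_walk: "walk_in V E x y n \<Longrightarrow> dist V E x y \<le> n"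
  unfolding dist_def by (rule Least_le)

lemma walk_dist: "x \<in> V \<Longrightarrow> y \<in> V \<Longrightarrow> walk_in V E x y (dist V E x y)"
  unfolding dist_def using reachable[of x y] unfolding reachable_in_def by (metis LeastI)

lemma dist_self: "x \<in> V \<Longrightarrow> dist V E x x = 0"
  using dist_le_walk[OF walk_in_refl] by fastforce

lemma dist_eq_0_imp_eq: "x \<in> V \<Longrightarrow> y \<in> V \<Longrightarrow> dist V E x y = 0 \<Longrightarrow> x = y"
  using walk_dist[of x y] unfolding walk_in_def by auto

lemma dist_triangle:
  "x \<in> V \<Longrightarrow> y \<in> V \<Longrightarrow> z \<in> V \<Longrightarrow> dist V E x z \<le> dist V E x y + dist V E y z"
  using dist_le_walk[OF walk_in_append[OF walk_dist[of x y] walk_dist[of y z]]] by auto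

lemma dist_edge: "E x y \<Longrightarrow> dist V E x y = 1"
  using dist_le_walk[OF walk_in_edge[of E x y V]] E_in_V[of x y] dist_eq_0_imp_eq[of x y] irrefl_E
  by fastforce

lemma dist_adjacent: "x \<in> V \<Longrightarrow> E a b \<Longrightarrow> dist V E x b \<le> dist V E x a + 1"
  using dist_triangle[of x a b] dist_edge[of a b] E_in_V[of a b] by auto

lemma dist_predecessor:
  assumes "x \<in> V" "z \<in> V" "dist V E x z = Suc m"
  shows "\<exists>w \<in> V. E w z \<and> dist V E x w = m"
proof -
  obtain p where p: "p 0 = x" "p (Suc m) = z" "\<forall>i\<le>Suc m. p i \<in> V"
      "\<forall>i<Suc m. E (p i) (p (Suc i))"
    using walk_dist[OF assms(1,2)] assms(3) unfolding walk_in_def by auto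
  have "dist V E x (p m) \<le> m"
    using dist_le_walk walk_in_segment[of "Suc m" p V E 0 m] p(1,3,4) by simp
  moreover have "E (p m) z" using p(2,4) by auto
  moreover have "dist V E x z \<le> dist V E x (p m) + 1" using dist_adjacent[OF assms(1)] calculation(2) .
  ultimately show ?thesis using assms(3) p(3) by (intro bexI[of _ "p m"]) auto
qed

(* The vertex f i is the unique vertex of S at distance i from v; geodesics inside S make
   consecutive levels adjacent, and an edge can only join levels that differ by one. *)
lemma induced_is_path_if_dist_inj:
  assumes "v \<in> S" "S \<subseteq> V" and inj: "inj_on (dist V E v) S"
    and geodesic: "\<And>z m. z \<in> S \<Longrightarrow> dist V E v z = Suc m \<Longrightarrow> \<exists>w\<in>S. E w z \<and> dist V E v w = m"
  shows "induced_is_path E S"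
proof -
  define d where "d = dist V E v"
  define n where "n = card S"
  have "finite S" using assms(2) finite_V finite_subset by blast
  have levels: "d ` S = {..<n}"
  proof -
    have "d ` S = {..<card (d ` S)}"
    proof (rule pred_closed_nat_set_eq_lessThan)
      fix m assume "Suc m \<in> d ` S"
      then obtain z where "z \<in> S" "d z = Suc m" by auto
      then show "m \<in> d ` S" using geodesic unfolding d_def by blast
    qed (use \<open>finite S\<close> in simp)
    then show ?thesis using card_image[OF inj] unfolding n_def d_def by simp
  qed
  define f where "f = inv_into S d"
  have bij: "bij_betw f {0..<n} S"
    unfolding f_def using bij_betw_inv_into[of d S "{..<n}"] inj levels
    by (simp add: bij_betw_def d_def lessThan_atLeast0)
  have f_in: "f i \<in> S" and d_f: "d (f i) = i" if "i < n" for i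
    using that levels unfolding f_def by (auto intro: inv_into_into f_inv_into_f)
  have f_d: "f (d z) = z" if "z \<in> S" for z
    using that inj unfolding f_def d_def by (simp add: inv_into_f_f)
  have edge: "E (f i) (f j) \<longleftrightarrow> (i = Suc j \<or> j = Suc i)" if ij: "i < n" "j < n" for i j
  proof
    assume e: "E (f i) (f j)"
    have "v \<in> V" using assms(1,2) by blast
    have "j \<le> i + 1" "i \<le> j + 1"
      using dist_adjacent[OF \<open>v \<in> V\<close> e] dist_adjacent[OF \<open>v \<in> V\<close>, of "f j" "f i"] e sym_E d_f ij
      unfolding d_def by auto
    moreover have "i \<noteq> j" using e irrefl_E by auto
    ultimately show "i = Suc j \<or> j = Suc i" by linarith
  next
    have "E (f k) (f (Suc k))" if "Suc k < n" for k
    proof -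
      obtain w where "w \<in> S" "E w (f (Suc k))" "d w = k"
        using geodesic f_in d_f \<open>Suc k < n\<close> unfolding d_def by blast
      then show ?thesis using f_d by metis
    qed
    then show "i = Suc j \<or> j = Suc i \<Longrightarrow> E (f i) (f j)" using ij sym_E by blast
  qed
  have "n \<ge> 1" using \<open>finite S\<close> assms(1) unfolding n_def by (auto simp: Suc_le_eq card_gt_0_iff)
  then show ?thesis unfolding induced_is_path_def using bij edge by blast
qed

end

subsection \<open>Components of G - v\<close>

locale conn_graph_vertex = conn_graph +
  fixes v assumes v_in_V: "v \<in> V"
begin

abbreviation comps :: "'a set set" where "comps \<equiv> components_minus V E v"

abbreviation comp_of :: "'a \<Rightarrow> 'a set" where "comp_of z \<equiv> {y. reachable_in (V - {v}) E z y}"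

lemma comp_subset: "C \<in> comps \<Longrightarrow> C \<subseteq> V - {v}"
  unfolding components_minus_def reachable_in_def by (auto dest: walk_in_endpoints)

lemma comp_of_in_comps: "z \<in> V - {v} \<Longrightarrow> z \<in> comp_of z \<and> comp_of z \<in> comps"
  unfolding components_minus_def reachable_in_def by (auto intro: walk_in_refl)

lemma comp_eq_comp_of: assumes "C \<in> comps" "z \<in> C" shows "C = comp_of z"
proof -
  obtain x where x: "C = comp_of x" using assms(1) unfolding components_minus_def by blast
  then have xz: "reachable_in (V - {v}) E x z" using assms(2) by simp
  have zx: "reachable_in (V - {v}) E z x" using reachable_in_sym[OF sym_E xz] .
  show ?thesis unfolding x using reachable_in_trans[OF xz] reachable_in_trans[OF zx] by blast
qed

lemma comps_disjoint: "C \<in> comps \<Longrightarrow> C' \<in> comps \<Longrightarrow> z \<in> C \<Longrightarrow> z \<in> C' \<Longrightarrow> C = C'"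
  using comp_eq_comp_of by metis

lemma comp_closed_edge:
  assumes "C \<in> comps" "z \<in> C" "E z w" "w \<noteq> v"
  shows "w \<in> C"
proof -
  have "walk_in (V - {v}) E z w 1"
    using comp_subset[OF assms(1)] assms E_in_V by (intro walk_in_edge) auto
  then show ?thesis using comp_eq_comp_of[OF assms(1,2)] unfolding reachable_in_def by blast
qed

lemma walk_leaves_comp_through_v:
  assumes "C \<in> comps" "\<forall>i<n. E (p i) (p (Suc i))" "p 0 \<in> C" "p n \<notin> C"
  shows "\<exists>i<n. p i \<in> C \<and> p (Suc i) = v"
  using exists_exit_step[of "\<lambda>x. x \<in> C" p n] assms comp_closed_edge by blast

lemma comp_has_neighbour: assumes "C \<in> comps" shows "\<exists>a\<in>C. E a v"
proof -
  obtain x where x: "x \<in> V - {v}" "C = comp_of x" using assms unfolding components_minus_def by blast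
  then have "x \<in> C" using comp_of_in_comps[OF x(1)] by simp
  have "reachable_in V E x v" using reachable x(1) v_in_V by blast
  then obtain n where "walk_in V E x v n" unfolding reachable_in_def ..
  then obtain p where p: "p 0 = x" "p n = v" "\<forall>i<n. E (p i) (p (Suc i))"
    unfolding walk_in_def by blast
  moreover have "v \<notin> C" using comp_subset[OF assms] by blast
  ultimately obtain i where "i < n" "p i \<in> C" "p (Suc i) = v"
    using walk_leaves_comp_through_v[OF assms p(3)] \<open>x \<in> C\<close> by auto
  then show ?thesis using p(3) by metis
qed

(* v separates its components: a shortest walk leaving C passes through v. *)
lemma dist_through_cut:
  assumes "C \<in> comps" "r \<in> insert v C" "y \<in> V" "y \<notin> C"
  shows "dist V E r y = dist V E r v + dist V E v y"
proof (cases "r = v")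
  case True then show ?thesis using dist_self[OF v_in_V] by simp
next
  case False
  then have "r \<in> C" "r \<in> V" using assms(2) comp_subset[OF assms(1)] by auto
  define n where "n = dist V E r y"
  obtain p where p: "p 0 = r" "p n = y" "\<forall>i\<le>n. p i \<in> V" "\<forall>i<n. E (p i) (p (Suc i))"
    using walk_dist[OF \<open>r \<in> V\<close> assms(3)] unfolding walk_in_def n_def by blast
  obtain i where i: "i < n" "p (Suc i) = v"
    using walk_leaves_comp_through_v[OF assms(1) p(4)] p(1,2) \<open>r \<in> C\<close> assms(4) by blast
  have "dist V E r v \<le> Suc i" "dist V E v y \<le> n - Suc i"
    using dist_le_walk walk_in_segment[OF p(3,4), of 0 "Suc i"] walk_in_segment[OF p(3,4), of "Suc i" n]
      i p(1,2) by auto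
  moreover have "dist V E r y \<le> dist V E r v + dist V E v y"
    using dist_triangle[OF \<open>r \<in> V\<close> v_in_V assms(3)] .
  ultimately show ?thesis using i(1) unfolding n_def by linarith
qed

lemma resolving_within_comp_card_comps:
  assumes "resolving_set V E R" "C0 \<in> comps" "R \<subseteq> insert v C0"
  shows "card comps \<le> 2"
proof (rule ccontr)
  assume "\<not> card comps \<le> 2"
  then have "finite comps" using card.infinite by fastforce
  then have "\<not> card (comps - {C0}) \<le> Suc 0"
    using \<open>\<not> card comps \<le> 2\<close> card_Diff_singleton[OF assms(2)] by simp
  then obtain Ca Cb where C: "Ca \<in> comps" "Cb \<in> comps" "Ca \<noteq> C0" "Cb \<noteq> C0" "Ca \<noteq> Cb"
    using card_le_Suc0_iff_eq[of "comps - {C0}"] \<open>finite comps\<close> by blast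
  obtain a b where ab: "a \<in> Ca" "b \<in> Cb" "E a v" "E b v"
    using comp_has_neighbour[OF C(1)] comp_has_neighbour[OF C(2)] by blast
  have "a \<noteq> b" using comps_disjoint[OF C(1,2)] ab C(5) by blast
  moreover have "a \<in> V" "a \<notin> C0" using comp_subset[OF C(1)] comps_disjoint[OF C(1) assms(2)] ab C(3)
    by blast+
  moreover have "b \<in> V" "b \<notin> C0" using comp_subset[OF C(2)] comps_disjoint[OF C(2) assms(2)] ab C(4)
    by blast+
  moreover have "dist V E r a = dist V E r b" if "r \<in> R" for r
  proof -
    have "r \<in> insert v C0" using that assms(3) by blast
    then show ?thesis
      using dist_through_cut[OF assms(2), of r a] dist_through_cut[OF assms(2), of r b]
        dist_edge[OF sym_E[rule_format, OF ab(3)]] dist_edge[OF sym_E[rule_format, OF ab(4)]]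
        calculation by simp
  qed
  ultimately show False using assms(1) unfolding resolving_set_def by blast
qed

lemma resolving_within_comp_induced_path:
  assumes "resolving_set V E R" "C0 \<in> comps" "R \<subseteq> insert v C0" "C \<in> comps" "C \<noteq> C0"
  shows "induced_is_path E (C \<union> {v})"
proof (rule induced_is_path_if_dist_inj)
  have C_outside: "z \<in> V \<and> z \<notin> C0" if "z \<in> C \<union> {v}" for z
    using that comps_disjoint[OF assms(4,2)] assms(5) comp_subset[OF assms(2)] comp_subset[OF assms(4)]
      v_in_V by blast
  show "inj_on (dist V E v) (C \<union> {v})"
  proof (rule inj_onI, rule ccontr)
    fix z1 z2
    assume z: "z1 \<in> C \<union> {v}" "z2 \<in> C \<union> {v}" "dist V E v z1 = dist V E v z2" "z1 \<noteq> z2"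
    then obtain r where "r \<in> R" "dist V E r z1 \<noteq> dist V E r z2"
      using assms(1) C_outside unfolding resolving_set_def by blast
    then show False using dist_through_cut[OF assms(2)] assms(3) C_outside z by (metis subsetD)
  qed
  show "\<exists>w\<in>C \<union> {v}. E w z \<and> dist V E v w = m"
    if z: "z \<in> C \<union> {v}" and dist_z: "dist V E v z = Suc m" for z m
  proof -
    have "z \<noteq> v" using dist_z dist_self[OF v_in_V] by auto
    then have "z \<in> C" "z \<in> V" using z comp_subset[OF assms(4)] by auto
    then obtain w where "w \<in> V" "E w z" "dist V E v w = m"
      using dist_predecessor[OF v_in_V _ dist_z] by blast
    then show ?thesis using comp_closed_edge[OF assms(4) \<open>z \<in> C\<close>] sym_E by blast
  qed
qed (use comp_subset[OF assms(4)] v_in_V in auto)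

lemma resolving_meets_outside_comp:
  assumes resolving: "resolving_set V E R" and "C \<in> comps"
    and "card comps \<ge> 3 \<or> (\<exists>C1 C2. comps = {C1, C2} \<and> C1 \<noteq> C2 \<and>
           \<not> induced_is_path E (C1 \<union> {v}) \<and> \<not> induced_is_path E (C2 \<union> {v}))"
  shows "\<exists>r\<in>R - {v}. r \<notin> C"
proof (rule ccontr)
  assume "\<not> (\<exists>r\<in>R - {v}. r \<notin> C)"
  then have within: "R \<subseteq> insert v C" by blast
  from assms(3) show False
  proof
    assume "card comps \<ge> 3"
    then show False using resolving_within_comp_card_comps[OF resolving \<open>C \<in> comps\<close> within] by simp
  next
    assume "\<exists>C1 C2. comps = {C1, C2} \<and> C1 \<noteq> C2 \<and>
      \<not> induced_is_path E (C1 \<union> {v}) \<and> \<not> induced_is_path E (C2 \<union> {v})"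
    then obtain C' where "C' \<in> comps" "C' \<noteq> C" "\<not> induced_is_path E (C' \<union> {v})"
      using \<open>C \<in> comps\<close> by blast
    then show False using resolving_within_comp_induced_path[OF resolving \<open>C \<in> comps\<close> within] by blast
  qed
qed

(* If d(v,x) < d(v,y), a landmark r outside the component of y sees y through v. *)
lemma resolving_Diff_cut_vertex:
  assumes "resolving_set V E R" and spread: "\<forall>C\<in>comps. \<exists>r\<in>R - {v}. r \<notin> C"
  shows "resolving_set V E (R - {v})"
proof -
  have R_V: "R \<subseteq> V" using assms(1) unfolding resolving_set_def by blast
  have separate: "\<exists>r\<in>R - {v}. dist V E r x \<noteq> dist V E r y"
    if x: "x \<in> V" and y: "y \<in> V" and closer: "dist V E v x < dist V E v y" for x y
  proof -
    have "y \<noteq> v" using closer dist_self[OF v_in_V] by auto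
    then have "y \<in> V - {v}" using y by blast
    note y_comp = comp_of_in_comps[OF this]
    obtain r where r: "r \<in> R - {v}" "r \<notin> comp_of y" using spread y_comp by blast
    then have "r \<in> V - {v}" using R_V by blast
    note r_comp = comp_of_in_comps[OF this]
    have "y \<notin> comp_of r"
    proof
      assume "y \<in> comp_of r"
      then have "comp_of r = comp_of y" using comp_eq_comp_of r_comp by blast
      then show False using r(2) r_comp by simp
    qed
    then have "dist V E r y = dist V E r v + dist V E v y"
      using dist_through_cut[OF conjunct2[OF r_comp] _ y] conjunct1[OF r_comp] by blast
    moreover have "dist V E r x \<le> dist V E r v + dist V E v x"
      using dist_triangle \<open>r \<in> V - {v}\<close> v_in_V x by blast
    ultimately have "dist V E r x \<noteq> dist V E r y" using closer by linarith
    then show ?thesis using r(1) by blast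
  qed
  show ?thesis unfolding resolving_set_def
  proof (intro conjI ballI impI)
    fix x y assume xy: "x \<in> V" "y \<in> V" "x \<noteq> y"
    then obtain r where r: "r \<in> R" "dist V E r x \<noteq> dist V E r y"
      using assms(1) unfolding resolving_set_def by blast
    show "\<exists>r\<in>R - {v}. dist V E r x \<noteq> dist V E r y"
    proof (cases "r = v")
      case True
      then show ?thesis using separate xy r(2) by (metis linorder_neqE_nat)
    qed (use r in blast)
  qed (use R_V in blast)
qed

end

lemma metric_basis_Diff_not_resolving:
  assumes "metric_basis V E R" "v \<in> R" "finite V"
  shows "\<not> resolving_set V E (R - {v})"
proof
  assume "resolving_set V E (R - {v})"
  then have "metric_dim V E \<le> card (R - {v})"
    unfolding metric_dim_def by (metis (mono_tags) Least_le)
  moreover have "finite R" using assms unfolding metric_basis_def resolving_set_def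
    using finite_subset by blast
  ultimately show False using assms(1,2) card_Diff1_less unfolding metric_basis_def by fastforce
qed

theorem theorem1:
  fixes V :: "'a set" and E :: "'a \<Rightarrow> 'a \<Rightarrow> bool" and v :: 'a
  assumes "connected_graph V E"
    and "cut_vertex V E v"
    and "card (components_minus V E v) \<ge> 3 \<or>
         (\<exists>C1 C2. components_minus V E v = {C1, C2} \<and> C1 \<noteq> C2 \<and>
            \<not> induced_is_path E (C1 \<union> {v}) \<and> \<not> induced_is_path E (C2 \<union> {v}))"
  shows "void_vertex V E v"
proof -
  have "v \<in> V" using assms(2) unfolding cut_vertex_def by blast
  interpret conn_graph_vertex V E v using assms(1) \<open>v \<in> V\<close> by unfold_locales
  have "v \<notin> R" if basis: "metric_basis V E R" for R
  proof
    assume "v \<in> R"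
    have resolving: "resolving_set V E R" using basis unfolding metric_basis_def by blast
    have "\<forall>C\<in>comps. \<exists>r\<in>R - {v}. r \<notin> C"
      using resolving_meets_outside_comp[OF resolving _ assms(3)] by blast
    then have "resolving_set V E (R - {v})" by (rule resolving_Diff_cut_vertex[OF resolving])
    then show False using metric_basis_Diff_not_resolving[OF basis \<open>v \<in> R\<close> finite_V] by blast
  qed
  then show ?thesis unfolding void_vertex_def using \<open>v \<in> V\<close> by blast
qed

end
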